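(* Let $n>2$ and $V=\mathbb{F}_2^n$. The number of elementary abelian regular subgroups $R$ of $\mathrm{Sym}(V)$ such that $R\cap T$ has index $4$ in $T$ is $$t_n=\frac{(2^{n-2}-1)(2^{n-1}-1)(2^n-1)}{3}.$$
   Context: $T=\{\sigma_v:v\in V\}\le\mathrm{Sym}(V)$ is the group of translations $\sigma_v:x\mapsto x+v$. *)

theory Defs
  imports "HOL-Algebra.Bij"
begin

text \<open>The vector space V = F_2^n, realised as boolean lists of length n
  (False = 0, True = 1, addition = componentwise exclusive or).\<close>

definition Vn :: "nat \<Rightarrow> bool list set" where
  "Vn n = {xs. length xs = n}"

definition vadd :: "bool list \<Rightarrow> bool list \<Rightarrow> bool list" where
  "vadd x v = map2 (\<lambda>a b. a \<noteq> b) x v"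

text \<open>Sym(V) is the group BijGroup (Vn n); the translation sigma_v maps x to x + v.\<close>

definition transl :: "nat \<Rightarrow> bool list \<Rightarrow> (bool list \<Rightarrow> bool list)" where
  "transl n v = (\<lambda>x \<in> Vn n. vadd x v)"

definition transl_group :: "nat \<Rightarrow> (bool list \<Rightarrow> bool list) set" where
  "transl_group n = transl n ` Vn n"

definition elementary_abelian_subgroup :: "'a set \<Rightarrow> ('a, 'b) monoid_scheme \<Rightarrow> bool" where
  "elementary_abelian_subgroup H G \<longleftrightarrow>
     subgroup H G \<and> (\<forall>x\<in>H. \<forall>y\<in>H. x \<otimes>\<^bsub>G\<^esub> y = y \<otimes>\<^bsub>G\<^esub> x) \<and> (\<forall>x\<in>H. x \<otimes>\<^bsub>G\<^esub> x = \<one>\<^bsub>G\<^esub>)"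

definition regular_on :: "'a set \<Rightarrow> ('a \<Rightarrow> 'a) set \<Rightarrow> bool" where
  "regular_on S R \<longleftrightarrow> (\<forall>x\<in>S. \<forall>y\<in>S. \<exists>!g. g \<in> R \<and> g x = y)"

end

theory Submission
  imports Defs
begin

text \<open>Let \<open>R\<close> be such a group and \<open>W = {w. \<sigma>\<^sub>w \<in> R}\<close>, a subgroup of index 4 in \<open>V\<close>.
  Regularity parametrises \<open>R\<close> by its elements \<open>\<rho>\<^sub>y\<close> with \<open>\<rho>\<^sub>y 0 = y\<close>, and
  \<open>\<rho>\<^sub>y x = x + y + D(x, y)\<close> with a defect \<open>D(x, y) \<in> W\<close> that vanishes unless \<open>x, y\<close> are
  independent modulo \<open>W\<close>. Commutativity and associativity in \<open>R\<close> make \<open>D\<close> a symmetric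
  cocycle that only depends on the classes modulo \<open>W\<close>, which forces it to be a constant
  \<open>d \<in> W - {0}\<close> on independent pairs. Conversely, writing \<open>W\<close> as the common kernel of two
  independent functionals \<open>u\<^sub>1, u\<^sub>2\<close>, the rule \<open>x + y + B(x, y) d\<close> with the alternating
  form \<open>B = u\<^sub>1 \<otimes> u\<^sub>2 + u\<^sub>2 \<otimes> u\<^sub>1\<close> defines such a group for every \<open>d\<close>, and \<open>W, d\<close> are
  recovered from it. So \<open>t\<^sub>n = s\<^sub>n (2\<^sup>n\<^sup>-\<^sup>2 - 1)\<close>, where \<open>s\<^sub>n\<close> is the number of
  subgroups of index 4: each is the common kernel of exactly six ordered pairs of independent
  functionals, so \<open>6 s\<^sub>n = (2\<^sup>n - 1)(2\<^sup>n - 2)\<close>.\<close>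

section \<open>Linear algebra over \<open>F\<^sub>2\<close> on boolean lists\<close>

definition vzero :: "nat \<Rightarrow> bool list" where
  "vzero n = replicate n False"

definition vscale :: "bool \<Rightarrow> bool list \<Rightarrow> bool list" where
  "vscale c x = map (\<lambda>a. c \<and> a) x"

fun vdot :: "bool list \<Rightarrow> bool list \<Rightarrow> bool" where
  "vdot (a # u) (b # x) = ((a \<and> b) \<noteq> vdot u x)"
| "vdot _ _ = False"

definition unit_vec :: "nat \<Rightarrow> nat \<Rightarrow> bool list" where
  "unit_vec n i = map (\<lambda>j. j = i) [0..<n]"

lemma mem_Vn_iff [simp]: "x \<in> Vn n \<longleftrightarrow> length x = n"
  by (simp add: Vn_def)

lemma length_vadd [simp]: "length (vadd x y) = min (length x) (length y)"
  by (simp add: vadd_def)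

lemma nth_vadd [simp]: "i < length x \<Longrightarrow> i < length y \<Longrightarrow> vadd x y ! i = (x ! i \<noteq> y ! i)"
  by (simp add: vadd_def)

lemma length_vzero [simp]: "length (vzero n) = n"
  by (simp add: vzero_def)

lemma nth_vzero [simp]: "i < n \<Longrightarrow> vzero n ! i = False"
  by (simp add: vzero_def)

lemma length_vscale [simp]: "length (vscale c x) = length x"
  by (simp add: vscale_def)

lemma nth_vscale [simp]: "i < length x \<Longrightarrow> vscale c x ! i = (c \<and> x ! i)"
  by (simp add: vscale_def)

lemma vscale_True [simp]: "vscale True x = x"
  and vscale_False [simp]: "vscale False x = vzero (length x)"
  by (simp_all add: vscale_def vzero_def map_replicate_const)

lemma length_unit_vec [simp]: "length (unit_vec n i) = n"
  by (simp add: unit_vec_def)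

lemma nth_unit_vec [simp]: "j < n \<Longrightarrow> unit_vec n i ! j = (j = i)"
  by (simp add: unit_vec_def)

lemma Vn_eqI: "length x = n \<Longrightarrow> length y = n \<Longrightarrow> (\<And>i. i < n \<Longrightarrow> x ! i = y ! i) \<Longrightarrow> x = y"
  by (simp add: list_eq_iff_nth_eq)

lemma vadd_comm: "vadd x y = vadd y x"
  by (rule nth_equalityI) auto

lemma vadd_assoc: "vadd (vadd x y) z = vadd x (vadd y z)"
  by (rule nth_equalityI) auto

lemma vadd_left_commute: "vadd x (vadd y z) = vadd y (vadd x z)"
  by (rule nth_equalityI) auto

lemmas vadd_ac = vadd_assoc vadd_comm vadd_left_commute

lemma vadd_vzero [simp]: "length x = n \<Longrightarrow> vadd x (vzero n) = x"
  and vzero_vadd [simp]: "length x = n \<Longrightarrow> vadd (vzero n) x = x"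
  by (rule nth_equalityI; simp)+

lemma vadd_self [simp]: "length x = n \<Longrightarrow> vadd x x = vzero n"
  by (rule nth_equalityI) auto

lemma vadd_cancel_left [simp]: "length x = length y \<Longrightarrow> vadd x (vadd x y) = y"
  by (rule nth_equalityI) auto

lemma vadd_cancel_right [simp]: "length x = length y \<Longrightarrow> vadd (vadd y x) x = y"
  by (rule nth_equalityI) auto

lemma vadd_eq_vzero_iff: "length x = n \<Longrightarrow> length y = n \<Longrightarrow> vadd x y = vzero n \<longleftrightarrow> x = y"
  by (auto simp: list_eq_iff_nth_eq)

lemma vdot_comm: "vdot u x = vdot x u"
  by (induction u x rule: vdot.induct) auto

lemma vdot_vadd_right:
  "length u = length x \<Longrightarrow> length x = length y \<Longrightarrow> vdot u (vadd x y) = (vdot u x \<noteq> vdot u y)"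
proof (induction u arbitrary: x y)
  case (Cons a u)
  then obtain b x' c y' where "x = b # x'" "y = c # y'"
    by (cases x; cases y) auto
  with Cons show ?case
    by (auto simp: vadd_def)
qed simp

lemma vdot_vadd_left:
  "length u = length x \<Longrightarrow> length u = length y \<Longrightarrow> vdot (vadd u y) x = (vdot u x \<noteq> vdot y x)"
  by (simp add: vdot_comm vdot_vadd_right)

lemmas vdot_vadd = vdot_vadd_left vdot_vadd_right

lemma vdot_vzero [simp]: "vdot u (vzero n) = False"
  by (induction u arbitrary: n) (auto simp: vzero_def, case_tac n, auto)

lemma vzero_vdot [simp]: "vdot (vzero n) u = False"
  by (subst vdot_comm) simp

lemma vdot_vscale_right: "vdot u (vscale c x) = (c \<and> vdot u x)"
  by (induction u x rule: vdot.induct) (auto simp: vscale_def)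

lemma vdot_vscale_left: "vdot (vscale c u) x = (c \<and> vdot u x)"
  by (simp add: vdot_comm[of _ x] vdot_vscale_right)

lemma vdot_single_support:
  assumes "length x = length u" "k < length u" "\<And>j. j < length u \<Longrightarrow> j \<noteq> k \<Longrightarrow> \<not> x ! j"
  shows "vdot u x = (u ! k \<and> x ! k)"
  using assms
proof (induction u arbitrary: x k)
  case (Cons a u)
  then obtain b x' where x: "x = b # x'"
    by (cases x) auto
  show ?case
  proof (cases k)
    case 0
    have "x' = vzero (length u)"
    proof (rule Vn_eqI)
      fix i
      assume "i < length u"
      then show "x' ! i = vzero (length u) ! i"
        using Cons.prems(3)[of "Suc i"] x 0 by simp
    qed (use Cons.prems x in auto)
    then show ?thesis
      using x 0 by simp
  next
    case (Suc k')
    have "vdot u x' = (u ! k' \<and> x' ! k')"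
      using Cons.prems x Suc by (intro Cons.IH) force+
    moreover have "\<not> b"
      using Cons.prems(3)[of 0] x Suc by simp
    ultimately show ?thesis
      using x Suc by simp
  qed
qed simp

lemma vdot_unit_vec [simp]: "length u = n \<Longrightarrow> k < n \<Longrightarrow> vdot u (unit_vec n k) = u ! k"
  by (subst vdot_single_support[of _ _ k]) auto

lemma card_Vn: "card (Vn n) = 2 ^ n"
proof -
  have "Vn n = {xs. set xs \<subseteq> (UNIV :: bool set) \<and> length xs = n}"
    by auto
  then show ?thesis
    using card_lists_length_eq[of "UNIV :: bool set" n] by simp
qed

lemma finite_Vn [simp]: "finite (Vn n)"
  using card_Vn[of n] card.infinite by fastforce

lemma finite_Vn_Collect [simp]: "finite {x :: bool list. length x = n \<and> P x}"
  by (rule finite_subset[OF _ finite_Vn[of n]]) auto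

definition vtrunc :: "nat \<Rightarrow> nat \<Rightarrow> bool list \<Rightarrow> bool list" where
  "vtrunc n k x = map (\<lambda>j. j < k \<and> x ! j) [0..<n]"

lemma length_vtrunc [simp]: "length (vtrunc n k x) = n"
  by (simp add: vtrunc_def)

lemma vtrunc_0: "vtrunc n 0 x = vzero n"
  by (simp add: vtrunc_def vzero_def map_replicate_const)

lemma vtrunc_Suc: "vtrunc n (Suc k) x = vadd (vtrunc n k x) (vscale (x ! k) (unit_vec n k))"
  by (rule Vn_eqI[of _ n]) (auto simp: vtrunc_def less_Suc_eq)

lemma vtrunc_full: "length x = n \<Longrightarrow> vtrunc n n x = x"
  by (intro Vn_eqI) (auto simp: vtrunc_def)

lemma additive_eq_vdot:
  assumes additive: "\<And>x y. x \<in> Vn n \<Longrightarrow> y \<in> Vn n \<Longrightarrow> p (vadd x y) = (p x \<noteq> p y)"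
  shows "\<exists>u\<in>Vn n. \<forall>x\<in>Vn n. p x = vdot u x"
proof -
  define u where "u = map (\<lambda>i. p (unit_vec n i)) [0..<n]"
  have p_vzero: "p (vzero n) = False"
    using additive[of "vzero n" "vzero n"] by simp
  have p_vscale: "p (vscale c (unit_vec n k)) = (c \<and> p (unit_vec n k))" for c k
    by (cases c) (simp_all add: p_vzero)
  have p_vtrunc: "p (vtrunc n k x) = vdot u (vtrunc n k x)" if "k \<le> n" for k x
    using that
  proof (induction k)
    case 0
    then show ?case
      using p_vzero by (simp add: vtrunc_0)
  next
    case (Suc k)
    have "p (vtrunc n (Suc k) x) = (p (vtrunc n k x) \<noteq> p (vscale (x ! k) (unit_vec n k)))"
      unfolding vtrunc_Suc by (rule additive) simp_all
    also have "\<dots> = (vdot u (vtrunc n k x) \<noteq> vdot u (vscale (x ! k) (unit_vec n k)))"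
      using Suc by (simp add: p_vscale vdot_vscale_right u_def)
    also have "\<dots> = vdot u (vtrunc n (Suc k) x)"
      unfolding vtrunc_Suc by (rule vdot_vadd_right[symmetric]) (simp_all add: u_def)
    finally show ?case .
  qed
  have "p x = vdot u x" if "x \<in> Vn n" for x
    using p_vtrunc[of n x] vtrunc_full[of x n] that by simp
  moreover have "u \<in> Vn n"
    by (simp add: u_def)
  ultimately show ?thesis
    by blast
qed

lemma vdot_eqI:
  assumes "u \<in> Vn n" "u' \<in> Vn n" "\<And>x. x \<in> Vn n \<Longrightarrow> vdot u x = vdot u' x"
  shows "u = u'"
proof (rule Vn_eqI[of _ n])
  fix i
  assume "i < n"
  then show "u ! i = u' ! i"
    using assms assms(3)[of "unit_vec n i"] by simp
qed (use assms in auto)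

lemma vdot_separate:
  assumes "a \<in> Vn n" "b \<in> Vn n" "a \<noteq> vzero n" "a \<noteq> b"
  shows "\<exists>z\<in>Vn n. vdot a z \<and> \<not> vdot b z"
proof -
  obtain i where i: "i < n" "a ! i \<noteq> b ! i"
    using assms(1,2,4) by (auto simp: list_eq_iff_nth_eq)
  obtain j where j: "j < n" "a ! j"
    using assms(1,3) by (auto simp: list_eq_iff_nth_eq)
  consider "a ! i" | "\<not> b ! j" | "\<not> a ! i" "b ! j"
    by blast
  then show ?thesis
  proof cases
    case 1
    then show ?thesis
      using i assms by (intro bexI[of _ "unit_vec n i"]) auto
  next
    case 2
    then show ?thesis
      using j assms by (intro bexI[of _ "unit_vec n j"]) auto
  next
    case 3
    then show ?thesis
      using i j assms by (intro bexI[of _ "vadd (unit_vec n i) (unit_vec n j)"]) (auto simp: vdot_vadd)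
  qed
qed

lemma card_eq_double_if_involution_swaps:
  assumes "finite A" "B \<subseteq> A" "\<And>x. x \<in> A \<Longrightarrow> f x \<in> A" "\<And>x. x \<in> A \<Longrightarrow> f (f x) = x"
    and "\<And>x. x \<in> A \<Longrightarrow> x \<in> B \<longleftrightarrow> f x \<notin> B"
  shows "card A = 2 * card B"
proof -
  have "A - B = f ` B"
  proof
    show "A - B \<subseteq> f ` B"
      using assms(4,5) by (metis Diff_iff image_eqI subsetI)
    show "f ` B \<subseteq> A - B"
      using assms(2,3,5) by blast
  qed
  moreover have "inj_on f B"
    using assms(2,4) by (metis inj_onI subsetD)
  ultimately have "card (A - B) = card B"
    by (simp add: card_image)
  moreover have "card A = card B + card (A - B)"
    using assms(1,2) by (metis card_Diff_subset card_mono le_add_diff_inverse finite_subset)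
  ultimately show ?thesis
    by simp
qed

definition common_kernel :: "nat \<Rightarrow> bool list \<Rightarrow> bool list \<Rightarrow> bool list set" where
  "common_kernel n a b = {x \<in> Vn n. \<not> vdot a x \<and> \<not> vdot b x}"

definition indep_pairs :: "nat \<Rightarrow> (bool list \<times> bool list) set" where
  "indep_pairs n = {(a, b). a \<in> Vn n \<and> b \<in> Vn n \<and> a \<noteq> vzero n \<and> b \<noteq> vzero n \<and> a \<noteq> b}"

lemma card_kernel:
  assumes "a \<in> Vn n" "a \<noteq> vzero n"
  shows "2 * card {x \<in> Vn n. \<not> vdot a x} = 2 ^ n"
proof -
  obtain z where z: "z \<in> Vn n" "vdot a z"
    using vdot_separate[of a n "vzero n"] assms by auto
  have "card (Vn n) = 2 * card {x \<in> Vn n. \<not> vdot a x}"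
    by (rule card_eq_double_if_involution_swaps[where f = "\<lambda>x. vadd x z"])
       (use z assms in \<open>auto simp: vdot_vadd\<close>)
  then show ?thesis
    by (simp add: card_Vn)
qed

lemma card_common_kernel:
  assumes "(a, b) \<in> indep_pairs n"
  shows "4 * card (common_kernel n a b) = 2 ^ n"
proof -
  obtain z where z: "z \<in> Vn n" "vdot b z" "\<not> vdot a z"
    using vdot_separate[of b n a] assms by (auto simp: indep_pairs_def)
  have "card {x \<in> Vn n. \<not> vdot a x} = 2 * card (common_kernel n a b)"
    by (rule card_eq_double_if_involution_swaps[where f = "\<lambda>x. vadd x z"])
       (use z assms in \<open>auto simp: vdot_vadd common_kernel_def indep_pairs_def\<close>)
  then show ?thesis
    using card_kernel[of a n] assms by (simp add: indep_pairs_def)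
qed

section \<open>Subgroups of index four\<close>

definition Vn_subgroup :: "nat \<Rightarrow> bool list set \<Rightarrow> bool" where
  "Vn_subgroup n W \<longleftrightarrow> W \<subseteq> Vn n \<and> vzero n \<in> W \<and> (\<forall>x\<in>W. \<forall>y\<in>W. vadd x y \<in> W)"

definition index4_subgroups :: "nat \<Rightarrow> bool list set set" where
  "index4_subgroups n = {W. Vn_subgroup n W \<and> 4 * card W = 2 ^ n}"

definition indep_mod :: "bool list set \<Rightarrow> bool list \<Rightarrow> bool list \<Rightarrow> bool" where
  "indep_mod W x y \<longleftrightarrow> x \<notin> W \<and> y \<notin> W \<and> vadd x y \<notin> W"

lemma common_kernel_in_index4_subgroups:
  "(a, b) \<in> indep_pairs n \<Longrightarrow> common_kernel n a b \<in> index4_subgroups n"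
  using card_common_kernel[of a b n]
  by (auto simp: index4_subgroups_def Vn_subgroup_def common_kernel_def indep_pairs_def vdot_vadd)

definition coset_map :: "bool list \<Rightarrow> bool list \<Rightarrow> bool \<times> bool \<times> bool list \<Rightarrow> bool list" where
  "coset_map a b = (\<lambda>(s, t, w). vadd (vadd (vscale s a) (vscale t b)) w)"

lemma length_coset_map [simp]:
  "length a = n \<Longrightarrow> length b = n \<Longrightarrow> length w = n \<Longrightarrow> length (coset_map a b (s, t, w)) = n"
  by (simp add: coset_map_def)

lemma coset_map_cancel:
  "length a = n \<Longrightarrow> length b = n \<Longrightarrow> length w = n \<Longrightarrow>
     vadd (coset_map a b (s, t, w)) (vadd (vscale s a) (vscale t b)) = w"
  by (intro Vn_eqI[of _ n]) (simp_all add: coset_map_def, argo)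

locale index4_subgroup =
  fixes n :: nat and W :: "bool list set"
  assumes index4: "W \<in> index4_subgroups n"
begin

lemma subset_Vn: "W \<subseteq> Vn n"
  and vzero_mem [simp]: "vzero n \<in> W"
  and vadd_mem: "x \<in> W \<Longrightarrow> y \<in> W \<Longrightarrow> vadd x y \<in> W"
  and card_eq: "4 * card W = 2 ^ n"
  using index4 by (auto simp: index4_subgroups_def Vn_subgroup_def)

lemma length_mem: "x \<in> W \<Longrightarrow> length x = n"
  using subset_Vn by auto

lemma finite [simp]: "finite W"
  using finite_subset[OF subset_Vn] by simp

lemma exists_indep_mod: "\<exists>a\<in>Vn n. \<exists>b\<in>Vn n. indep_mod W a b"
proof -
  have pos: "(0::nat) < 2 ^ n"
    by simp
  have "card W < card (Vn n)"
    using card_eq card_Vn[of n] pos by linarith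
  then have "\<not> Vn n \<subseteq> W"
    using card_mono[OF finite, of "Vn n"] by linarith
  then obtain a where a: "a \<in> Vn n" "a \<notin> W"
    by blast
  let ?A = "W \<union> vadd a ` W"
  have "card ?A \<le> card W + card (vadd a ` W)"
    by (rule card_Un_le)
  also have "\<dots> \<le> 2 * card W"
    using card_image_le[OF finite, of "vadd a"] by simp
  also have "\<dots> < card (Vn n)"
    using card_eq card_Vn[of n] pos by linarith
  finally have "\<not> Vn n \<subseteq> ?A"
    using card_mono[of ?A "Vn n"] by auto
  then obtain b where b: "b \<in> Vn n" "b \<notin> ?A"
    by blast
  have "vadd a b \<notin> W"
  proof
    assume "vadd a b \<in> W"
    then have "vadd a (vadd a b) \<in> vadd a ` W"
      by (rule imageI)
    then show False
      using a b by simp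
  qed
  then show ?thesis
    using a b unfolding indep_mod_def by blast
qed

lemma coset_coords_unique:
  assumes "a \<in> Vn n" "b \<in> Vn n" "indep_mod W a b" "v \<in> Vn n"
    and "vadd v (vadd (vscale s a) (vscale t b)) \<in> W"
    and "vadd v (vadd (vscale s' a) (vscale t' b)) \<in> W"
  shows "s = s' \<and> t = t'"
proof -
  have "vadd (vadd v (vadd (vscale s a) (vscale t b))) (vadd v (vadd (vscale s' a) (vscale t' b)))
      = vadd (vscale (s \<noteq> s') a) (vscale (t \<noteq> t') b)"
    using assms(1,2,4) by (intro Vn_eqI[of _ n]) (simp_all, argo)
  then have "vadd (vscale (s \<noteq> s') a) (vscale (t \<noteq> t') b) \<in> W"
    using vadd_mem assms(5,6) by metis
  then show ?thesis
    using assms(1-3) by (cases "s = s'"; cases "t = t'") (auto simp: indep_mod_def)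
qed

lemma inj_on_coset_map:
  assumes a: "a \<in> Vn n" and b: "b \<in> Vn n" and indep: "indep_mod W a b"
  shows "inj_on (coset_map a b) (UNIV \<times> UNIV \<times> W)"
proof -
  have coset_map_inj: "s = s' \<and> t = t' \<and> w = w'"
    if w: "w \<in> W" "w' \<in> W" and eq: "coset_map a b (s, t, w) = coset_map a b (s', t', w')"
    for s t w s' t' w'
  proof -
    have "vadd (coset_map a b (s, t, w)) (vadd (vscale s' a) (vscale t' b)) \<in> W"
      unfolding eq using coset_map_cancel a b length_mem[OF w(2)] w(2) by simp
    then have st: "s = s' \<and> t = t'"
      using coset_coords_unique[OF a b indep, of "coset_map a b (s, t, w)" s t s' t']
        coset_map_cancel a b length_mem[OF w(1)] w(1)
      by simp
    have "w = vadd (coset_map a b (s, t, w)) (vadd (vscale s a) (vscale t b))"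
      using coset_map_cancel a b length_mem[OF w(1)] by simp
    also have "\<dots> = w'"
      using coset_map_cancel a b length_mem[OF w(2)] eq st by simp
    finally show ?thesis
      using st by simp
  qed
  show ?thesis
    by (rule inj_onI) (auto dest: coset_map_inj)
qed

text \<open>The four cosets of \<open>W\<close> represented by \<open>0, a, b, a + b\<close> are disjoint and of size
  \<open>card W\<close>, hence they exhaust \<open>Vn n\<close>.\<close>

lemma coset_map_image:
  assumes "a \<in> Vn n" "b \<in> Vn n" "indep_mod W a b"
  shows "coset_map a b ` (UNIV \<times> UNIV \<times> W) = Vn n"
proof (rule card_subset_eq)
  show "coset_map a b ` (UNIV \<times> UNIV \<times> W) \<subseteq> Vn n"
    using assms(1,2) length_mem by auto
  show "card (coset_map a b ` (UNIV \<times> UNIV \<times> W)) = card (Vn n)"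
    using inj_on_coset_map[OF assms] card_eq card_Vn[of n] by (simp add: card_image card_cartesian_product)
qed simp

lemma coset_coords_exist:
  assumes a: "a \<in> Vn n" and b: "b \<in> Vn n" and indep: "indep_mod W a b" and v: "v \<in> Vn n"
  shows "\<exists>s t. vadd v (vadd (vscale s a) (vscale t b)) \<in> W"
proof -
  have "v \<in> coset_map a b ` (UNIV \<times> UNIV \<times> W)"
    using v coset_map_image[OF a b indep] by simp
  then obtain s t w where "w \<in> W" "v = coset_map a b (s, t, w)"
    by auto
  then have "vadd v (vadd (vscale s a) (vscale t b)) \<in> W"
    using coset_map_cancel a b length_mem by simp
  then show ?thesis
    by blast
qed

lemma nonzero_coset_cases:
  assumes "a \<in> Vn n" "b \<in> Vn n" "indep_mod W a b" "x \<in> Vn n" "x \<notin> W"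
  shows "vadd x a \<in> W \<or> vadd x b \<in> W \<or> vadd x (vadd a b) \<in> W"
proof -
  obtain s t where "vadd x (vadd (vscale s a) (vscale t b)) \<in> W"
    using coset_coords_exist assms(1-4) by blast
  then show ?thesis
    using assms by (cases s; cases t) simp_all
qed

definition coset_coords :: "bool list \<Rightarrow> bool list \<Rightarrow> bool list \<Rightarrow> bool \<times> bool" where
  "coset_coords a b v = (THE (s, t). vadd v (vadd (vscale s a) (vscale t b)) \<in> W)"

lemma coset_coords_eqI:
  assumes "a \<in> Vn n" "b \<in> Vn n" "indep_mod W a b" "v \<in> Vn n"
    and "vadd v (vadd (vscale s a) (vscale t b)) \<in> W"
  shows "coset_coords a b v = (s, t)"
  unfolding coset_coords_def
  by (rule the_equality) (use assms coset_coords_unique[OF assms(1-4)] in auto)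

lemma coset_coords_vadd:
  assumes ab: "a \<in> Vn n" "b \<in> Vn n" "indep_mod W a b" and x: "x \<in> Vn n" and y: "y \<in> Vn n"
  shows "coset_coords a b (vadd x y)
    = (fst (coset_coords a b x) \<noteq> fst (coset_coords a b y),
       snd (coset_coords a b x) \<noteq> snd (coset_coords a b y))"
proof -
  obtain s1 t1 where 1: "vadd x (vadd (vscale s1 a) (vscale t1 b)) \<in> W"
    using coset_coords_exist[OF ab x] by blast
  obtain s2 t2 where 2: "vadd y (vadd (vscale s2 a) (vscale t2 b)) \<in> W"
    using coset_coords_exist[OF ab y] by blast
  have "vadd (vadd x (vadd (vscale s1 a) (vscale t1 b))) (vadd y (vadd (vscale s2 a) (vscale t2 b)))
      = vadd (vadd x y) (vadd (vscale (s1 \<noteq> s2) a) (vscale (t1 \<noteq> t2) b))"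
    using ab x y by (intro Vn_eqI[of _ n]) (simp_all, argo)
  then have "vadd (vadd x y) (vadd (vscale (s1 \<noteq> s2) a) (vscale (t1 \<noteq> t2) b)) \<in> W"
    using vadd_mem[OF 1 2] by simp
  then show ?thesis
    using coset_coords_eqI[OF ab] 1 2 x y by simp
qed

lemma mem_iff_coset_coords:
  assumes ab: "a \<in> Vn n" "b \<in> Vn n" "indep_mod W a b" and x: "x \<in> Vn n"
  shows "x \<in> W \<longleftrightarrow> coset_coords a b x = (False, False)"
proof
  assume "x \<in> W"
  then show "coset_coords a b x = (False, False)"
    using x ab by (intro coset_coords_eqI[OF ab]) simp_all
next
  assume c: "coset_coords a b x = (False, False)"
  obtain s t where st: "vadd x (vadd (vscale s a) (vscale t b)) \<in> W"
    using coset_coords_exist[OF ab x] by blast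
  then have "\<not> s" "\<not> t"
    using c coset_coords_eqI[OF ab x st] by simp_all
  then show "x \<in> W"
    using st x ab by simp
qed

lemma eq_common_kernel: "\<exists>u1 u2. (u1, u2) \<in> indep_pairs n \<and> W = common_kernel n u1 u2"
proof -
  obtain a b where ab: "a \<in> Vn n" "b \<in> Vn n" "indep_mod W a b"
    using exists_indep_mod by blast
  let ?c = "coset_coords a b"
  obtain u1 where u1: "u1 \<in> Vn n" "\<forall>x\<in>Vn n. fst (?c x) = vdot u1 x"
    using additive_eq_vdot[of n "\<lambda>x. fst (?c x)"] coset_coords_vadd[OF ab] by auto
  obtain u2 where u2: "u2 \<in> Vn n" "\<forall>x\<in>Vn n. snd (?c x) = vdot u2 x"
    using additive_eq_vdot[of n "\<lambda>x. snd (?c x)"] coset_coords_vadd[OF ab] by auto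
  have "?c a = (True, False)" "?c b = (False, True)"
    using ab by (simp_all add: coset_coords_eqI[OF ab])
  then have "vdot u1 a" "\<not> vdot u2 a" "vdot u2 b"
    using u1 u2 ab by (metis fst_conv snd_conv)+
  then have "u1 \<noteq> vzero n" "u2 \<noteq> vzero n" "u1 \<noteq> u2"
    by auto
  then have "(u1, u2) \<in> indep_pairs n"
    using u1(1) u2(1) by (simp add: indep_pairs_def)
  moreover have "W = common_kernel n u1 u2"
    using u1 u2 subset_Vn mem_iff_coset_coords[OF ab] by (auto simp: common_kernel_def prod_eq_iff)
  ultimately show ?thesis
    by blast
qed

end

section \<open>Counting subgroups of index four\<close>

lemma vanishing_on_common_kernel:
  assumes ab: "(a, b) \<in> indep_pairs n" and u: "u \<in> Vn n"
    and vanish: "\<And>x. x \<in> common_kernel n a b \<Longrightarrow> \<not> vdot u x"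
  shows "u \<in> {vzero n, a, b, vadd a b}"
proof -
  have ab': "a \<in> Vn n" "b \<in> Vn n" "a \<noteq> vzero n" "b \<noteq> vzero n" "a \<noteq> b"
    using ab by (auto simp: indep_pairs_def)
  obtain z1 where z1: "z1 \<in> Vn n" "vdot a z1" "\<not> vdot b z1"
    using vdot_separate[of a n b] ab' by blast
  obtain z2 where z2: "z2 \<in> Vn n" "vdot b z2" "\<not> vdot a z2"
    using vdot_separate[of b n a] ab' by blast
  define c1 c2 where "c1 = vdot u z1" and "c2 = vdot u z2"
  define w where "w = vadd (vscale c1 a) (vscale c2 b)"
  have "u = w"
  proof (rule vdot_eqI[OF u])
    show "w \<in> Vn n"
      using ab' by (simp add: w_def)
  next
    fix x
    assume x: "x \<in> Vn n"
    define x' where "x' = vadd x (vadd (vscale (vdot a x) z1) (vscale (vdot b x) z2))"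
    have "x' \<in> common_kernel n a b"
      using x z1 z2 ab' by (auto simp: x'_def common_kernel_def vdot_vadd vdot_vscale_right)
    moreover have "vdot u x' = (vdot u x \<noteq> ((vdot a x \<and> c1) \<noteq> (vdot b x \<and> c2)))"
      using x z1 z2 ab' u by (simp add: x'_def c1_def c2_def vdot_vadd vdot_vscale_right)
    moreover have "vdot w x = ((c1 \<and> vdot a x) \<noteq> (c2 \<and> vdot b x))"
      using x ab' by (simp add: w_def vdot_vadd_left vdot_vscale_left)
    ultimately show "vdot u x = vdot w x"
      using vanish by blast
  qed
  then show ?thesis
    using ab' by (cases c1; cases c2) (auto simp: w_def)
qed

lemma vadd_indep_pair:
  assumes "(a, b) \<in> indep_pairs n"
  shows "vadd a b \<in> Vn n" "vadd a b \<noteq> vzero n" "vadd a b \<noteq> a" "vadd a b \<noteq> b"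
proof -
  have ab: "length a = n" "length b = n" "a \<noteq> vzero n" "b \<noteq> vzero n" "a \<noteq> b"
    using assms by (auto simp: indep_pairs_def)
  show "vadd a b \<in> Vn n" "vadd a b \<noteq> vzero n"
    using ab vadd_eq_vzero_iff[of a n b] by simp_all
  show "vadd a b \<noteq> a"
  proof
    assume "vadd a b = a"
    then have "vadd a (vadd a b) = vadd a a"
      by simp
    then show False
      using ab by simp
  qed
  show "vadd a b \<noteq> b"
  proof
    assume "vadd a b = b"
    then have "vadd (vadd a b) b = vadd b b"
      by simp
    then show False
      using ab by simp
  qed
qed

lemma common_kernel_subset:
  assumes "(a, b) \<in> indep_pairs n" "x \<in> {a, b, vadd a b}" "y \<in> {a, b, vadd a b}"
  shows "common_kernel n a b \<subseteq> common_kernel n x y"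
  using assms by (auto simp: common_kernel_def indep_pairs_def vdot_vadd_left)

lemma common_kernel_fiber:
  assumes ab: "(a, b) \<in> indep_pairs n"
  shows "{p \<in> indep_pairs n. case_prod (common_kernel n) p = common_kernel n a b} =
     {(a, b), (b, a), (a, vadd a b), (vadd a b, a), (b, vadd a b), (vadd a b, b)}"
    (is "?L = ?R")
proof
  show "?L \<subseteq> ?R"
  proof
    fix p
    assume p: "p \<in> ?L"
    obtain u1 u2 where p_eq: "p = (u1, u2)"
      by (cases p)
    have u: "(u1, u2) \<in> indep_pairs n" "common_kernel n u1 u2 = common_kernel n a b"
      using p p_eq by simp_all
    have "u1 \<in> {vzero n, a, b, vadd a b}"
      by (rule vanishing_on_common_kernel[OF ab]) (use u in \<open>auto simp: indep_pairs_def common_kernel_def\<close>)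
    moreover have "u2 \<in> {vzero n, a, b, vadd a b}"
      by (rule vanishing_on_common_kernel[OF ab]) (use u in \<open>auto simp: indep_pairs_def common_kernel_def\<close>)
    ultimately show "p \<in> ?R"
      using u(1) p_eq by (auto simp: indep_pairs_def)
  qed
  show "?R \<subseteq> ?L"
  proof
    fix p
    assume p: "p \<in> ?R"
    obtain x y where p_eq: "p = (x, y)"
      by (cases p)
    have xy: "x \<in> {a, b, vadd a b}" "y \<in> {a, b, vadd a b}" "(x, y) \<in> indep_pairs n"
      using p p_eq ab vadd_indep_pair[OF ab] by (auto simp: indep_pairs_def)
    have "common_kernel n a b = common_kernel n x y"
      using common_kernel_subset[OF ab xy(1,2)] card_common_kernel[OF ab] card_common_kernel[OF xy(3)]
      by (intro card_subset_eq) (auto simp: common_kernel_def)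
    then show "p \<in> ?L"
      using xy p_eq by simp
  qed
qed

lemma card_common_kernel_fiber:
  "(a, b) \<in> indep_pairs n \<Longrightarrow>
     card {p \<in> indep_pairs n. case_prod (common_kernel n) p = common_kernel n a b} = 6"
  unfolding common_kernel_fiber using vadd_indep_pair[of a b n] by (auto simp: indep_pairs_def)

lemma finite_indep_pairs [simp]: "finite (indep_pairs n)"
  by (rule finite_subset[of _ "Vn n \<times> Vn n"]) (auto simp: indep_pairs_def)

lemma card_indep_pairs: "card (indep_pairs n) = (2 ^ n - 1) * (2 ^ n - 2)"
proof -
  have "indep_pairs n = (SIGMA a : Vn n - {vzero n}. Vn n - {vzero n, a})"
    by (auto simp: indep_pairs_def)
  moreover have "card (Vn n - {vzero n, a}) = 2 ^ n - 2" if "a \<in> Vn n - {vzero n}" for a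
    using that card_Vn[of n] by (subst card_Diff_subset) auto
  ultimately show ?thesis
    using card_Vn[of n] by simp
qed

lemma index4_subgroups_eq_image: "index4_subgroups n = case_prod (common_kernel n) ` indep_pairs n"
proof
  show "index4_subgroups n \<subseteq> case_prod (common_kernel n) ` indep_pairs n"
  proof
    fix W
    assume "W \<in> index4_subgroups n"
    then obtain u1 u2 where "(u1, u2) \<in> indep_pairs n" "W = common_kernel n u1 u2"
      using index4_subgroup.eq_common_kernel[of n W] by (auto simp: index4_subgroup_def)
    then show "W \<in> case_prod (common_kernel n) ` indep_pairs n"
      by force
  qed
  show "case_prod (common_kernel n) ` indep_pairs n \<subseteq> index4_subgroups n"
    using common_kernel_in_index4_subgroups by auto
qed

lemma finite_index4_subgroups: "finite (index4_subgroups n)"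
  by (simp add: index4_subgroups_eq_image)

lemma card_eq_mult_card_image_if_fibers:
  assumes "finite A" "\<And>x. x \<in> A \<Longrightarrow> card {y \<in> A. f y = f x} = k"
  shows "card A = k * card (f ` A)"
proof -
  have "card A = (\<Sum>z\<in>f ` A. card {y \<in> A. f y = z})"
    unfolding card_eq_sum by (rule sum.image_gen[OF assms(1)])
  also have "\<dots> = (\<Sum>z\<in>f ` A. k)"
    using assms(2) by (intro sum.cong) auto
  finally show ?thesis
    by simp
qed

lemma card_index4_subgroups: "6 * card (index4_subgroups n) = (2 ^ n - 1) * (2 ^ n - 2)"
proof -
  have "card (indep_pairs n) = 6 * card (case_prod (common_kernel n) ` indep_pairs n)"
    by (rule card_eq_mult_card_image_if_fibers) (use card_common_kernel_fiber in auto)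
  then show ?thesis
    by (simp add: index4_subgroups_eq_image card_indep_pairs)
qed

section \<open>Twisted translation groups\<close>

definition twisted_transl :: "nat \<Rightarrow> bool list set \<Rightarrow> bool list \<Rightarrow> bool list \<Rightarrow> bool list \<Rightarrow> bool list" where
  "twisted_transl n W d y = (\<lambda>x\<in>Vn n. vadd (vadd x y) (if indep_mod W x y then d else vzero n))"

definition twisted_transl_group :: "nat \<Rightarrow> bool list set \<Rightarrow> bool list \<Rightarrow> (bool list \<Rightarrow> bool list) set" where
  "twisted_transl_group n W d = twisted_transl n W d ` Vn n"

definition ea_regular_index4 :: "nat \<Rightarrow> (bool list \<Rightarrow> bool list) set set" where
  "ea_regular_index4 n = {R. elementary_abelian_subgroup R (BijGroup (Vn n)) \<and> regular_on (Vn n) R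
     \<and> card (transl_group n) = 4 * card (R \<inter> transl_group n)}"

lemma carrier_BijGroup: "carrier (BijGroup S) = Bij S"
  by (simp add: BijGroup_def)

lemma mult_BijGroup: "f \<in> Bij S \<Longrightarrow> g \<in> Bij S \<Longrightarrow> f \<otimes>\<^bsub>BijGroup S\<^esub> g = compose S f g"
  by (simp add: BijGroup_def)

lemma one_BijGroup: "\<one>\<^bsub>BijGroup S\<^esub> = (\<lambda>x\<in>S. x)"
  by (simp add: BijGroup_def)

lemma transl_apply_vzero: "v \<in> Vn n \<Longrightarrow> transl n v (vzero n) = v"
  by (simp add: transl_def)

lemma inj_on_transl: "inj_on (transl n) (Vn n)"
  by (rule inj_onI) (metis transl_apply_vzero)

lemma card_transl_group: "card (transl_group n) = 2 ^ n"
  by (simp add: transl_group_def card_image[OF inj_on_transl] card_Vn)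

text \<open>\<open>tadd\<close> is a second elementary abelian group law on \<open>Vn n\<close>; the twisted translation
  group is its group of translations \<open>rho y\<close>.\<close>

locale alternating_twist =
  fixes n :: nat and u1 u2 d :: "bool list"
  assumes indep: "(u1, u2) \<in> indep_pairs n"
    and d_mem: "d \<in> common_kernel n u1 u2"
    and d_nonzero: "d \<noteq> vzero n"
begin

definition bform :: "bool list \<Rightarrow> bool list \<Rightarrow> bool" where
  "bform x y = ((vdot u1 x \<and> vdot u2 y) \<noteq> (vdot u2 x \<and> vdot u1 y))"

definition tadd :: "bool list \<Rightarrow> bool list \<Rightarrow> bool list" where
  "tadd x y = vadd (vadd x y) (vscale (bform x y) d)"

definition rho :: "bool list \<Rightarrow> bool list \<Rightarrow> bool list" where
  "rho y = (\<lambda>x\<in>Vn n. tadd x y)"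

lemma params:
  "length u1 = n" "length u2 = n" "length d = n" "u1 \<noteq> vzero n" "u2 \<noteq> vzero n" "u1 \<noteq> u2"
  "\<not> vdot u1 d" "\<not> vdot u2 d"
  using indep d_mem by (auto simp: indep_pairs_def common_kernel_def)

lemma indep_mod_iff_bform:
  "x \<in> Vn n \<Longrightarrow> y \<in> Vn n \<Longrightarrow> indep_mod (common_kernel n u1 u2) x y = bform x y"
  using params by (auto simp: indep_mod_def common_kernel_def bform_def vdot_vadd)

lemma bform_vadd_left: "x \<in> Vn n \<Longrightarrow> z \<in> Vn n \<Longrightarrow> bform (vadd x z) y = (bform x y \<noteq> bform z y)"
  using params by (simp add: bform_def vdot_vadd) argo

lemma bform_vadd_right: "x \<in> Vn n \<Longrightarrow> z \<in> Vn n \<Longrightarrow> bform y (vadd x z) = (bform y x \<noteq> bform y z)"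
  using params by (simp add: bform_def vdot_vadd) argo

lemma bform_comm: "bform x y = bform y x"
  by (auto simp: bform_def)

lemma bform_self [simp]: "bform x x = False"
  by (auto simp: bform_def)

lemma bform_vscale_d [simp]: "bform (vscale c d) y = False" "bform y (vscale c d) = False"
  using params by (auto simp: bform_def vdot_vscale_left vdot_vscale_right)

lemma bform_vzero [simp]: "bform (vzero n) y = False" "bform y (vzero n) = False"
  by (auto simp: bform_def)

lemma length_tadd [simp]: "length x = n \<Longrightarrow> length y = n \<Longrightarrow> length (tadd x y) = n"
  using params by (simp add: tadd_def)

lemma tadd_comm: "tadd x y = tadd y x"
  by (simp add: tadd_def bform_comm vadd_comm)

lemma tadd_vzero [simp]: "x \<in> Vn n \<Longrightarrow> tadd x (vzero n) = x"
  using params by (simp add: tadd_def)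

lemma tadd_self [simp]: "x \<in> Vn n \<Longrightarrow> tadd x x = vzero n"
  using params by (simp add: tadd_def)

lemma tadd_assoc:
  assumes "x \<in> Vn n" "y \<in> Vn n" "z \<in> Vn n"
  shows "tadd (tadd x y) z = tadd x (tadd y z)"
proof -
  have "bform (tadd x y) z = (bform x z \<noteq> bform y z)"
    using assms params by (simp add: tadd_def bform_vadd_left)
  moreover have "bform x (tadd y z) = (bform x y \<noteq> bform x z)"
    using assms params by (simp add: tadd_def bform_vadd_right)
  ultimately show ?thesis
    using assms params bform_comm[of y z]
    by (simp add: tadd_def) (intro Vn_eqI[of _ n], simp_all, blast)
qed

lemma tadd_cancel_right: "x \<in> Vn n \<Longrightarrow> y \<in> Vn n \<Longrightarrow> tadd (tadd x y) y = x"
  by (simp add: tadd_assoc)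

lemma rho_Bij: "y \<in> Vn n \<Longrightarrow> rho y \<in> Bij (Vn n)"
  unfolding Bij_def rho_def
  by (auto intro!: bij_betwI[where g = "\<lambda>x. tadd x y"] simp: tadd_cancel_right)

lemma rho_mult: "y \<in> Vn n \<Longrightarrow> z \<in> Vn n \<Longrightarrow> rho y \<otimes>\<^bsub>BijGroup (Vn n)\<^esub> rho z = rho (tadd y z)"
proof -
  assume y: "y \<in> Vn n" and z: "z \<in> Vn n"
  have "compose (Vn n) (rho y) (rho z) = rho (tadd y z)"
    unfolding compose_def rho_def
    by (rule restrict_ext) (use y z in \<open>simp add: tadd_assoc tadd_comm[of z y]\<close>)
  then show ?thesis
    using mult_BijGroup[OF rho_Bij[OF y] rho_Bij[OF z]] by simp
qed

lemma rho_vzero: "rho (vzero n) = \<one>\<^bsub>BijGroup (Vn n)\<^esub>"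
  by (auto simp: one_BijGroup rho_def)

lemma rho_apply_vzero: "y \<in> Vn n \<Longrightarrow> rho y (vzero n) = y"
  by (simp add: rho_def tadd_comm[of "vzero n"])

lemma rho_eq_transl: "y \<in> common_kernel n u1 u2 \<Longrightarrow> rho y = transl n y"
  using params by (auto simp: rho_def transl_def tadd_def bform_def common_kernel_def)

lemma twisted_transl_eq_rho: "y \<in> Vn n \<Longrightarrow> twisted_transl n (common_kernel n u1 u2) d y = rho y"
  unfolding twisted_transl_def rho_def tadd_def
  by (rule restrict_ext) (use params in \<open>auto simp: indep_mod_iff_bform\<close>)

lemma twisted_transl_group_eq: "twisted_transl_group n (common_kernel n u1 u2) d = rho ` Vn n"
  unfolding twisted_transl_group_def using twisted_transl_eq_rho by (simp add: image_def)

text \<open>\<open>rho y\<close> is a translation exactly when \<open>bform _ y\<close> vanishes, which is tested on vectors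
  separating \<open>u1\<close> from \<open>u2\<close>.\<close>

lemma rho_in_transl_group_iff:
  assumes y: "y \<in> Vn n"
  shows "rho y \<in> transl_group n \<longleftrightarrow> y \<in> common_kernel n u1 u2"
proof
  assume "rho y \<in> transl_group n"
  then obtain v where v: "v \<in> Vn n" "rho y = transl n v"
    by (auto simp: transl_group_def)
  then have "v = y"
    using rho_apply_vzero[OF y] transl_apply_vzero[OF v(1)] by simp
  have no_bform: "\<not> bform x y" if x: "x \<in> Vn n" for x
  proof
    assume "bform x y"
    then have "vadd (vadd x y) d = vadd x y"
      using fun_cong[OF v(2), of x] x \<open>v = y\<close> by (simp add: rho_def transl_def tadd_def)
    then have "vadd (vadd x y) (vadd (vadd x y) d) = vadd (vadd x y) (vadd x y)"
      by simp
    then show False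
      using x y params d_nonzero by simp
  qed
  obtain z1 where z1: "z1 \<in> Vn n" "vdot u1 z1" "\<not> vdot u2 z1"
    using vdot_separate[of u1 n u2] params by auto
  obtain z2 where z2: "z2 \<in> Vn n" "vdot u2 z2" "\<not> vdot u1 z2"
    using vdot_separate[of u2 n u1] params by auto
  show "y \<in> common_kernel n u1 u2"
    using no_bform[OF z1(1)] no_bform[OF z2(1)] z1 z2 y by (simp add: bform_def common_kernel_def)
next
  assume "y \<in> common_kernel n u1 u2"
  then show "rho y \<in> transl_group n"
    using y rho_eq_transl by (simp add: transl_group_def)
qed

lemma rho_group_elementary_abelian: "elementary_abelian_subgroup (rho ` Vn n) (BijGroup (Vn n))"
proof -
  let ?G = "BijGroup (Vn n)"
  interpret G: group ?G
    by (rule group_BijGroup)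
  have "subgroup (rho ` Vn n) ?G"
  proof (rule G.subgroupI)
    show "rho ` Vn n \<subseteq> carrier ?G"
      using rho_Bij by (auto simp: carrier_BijGroup)
    have "vzero n \<in> Vn n"
      by simp
    then show "rho ` Vn n \<noteq> {}"
      by blast
  next
    fix f
    assume "f \<in> rho ` Vn n"
    then obtain y where y: "y \<in> Vn n" "f = rho y"
      by blast
    have "rho y \<otimes>\<^bsub>?G\<^esub> rho y = \<one>\<^bsub>?G\<^esub>"
      using y by (simp add: rho_mult rho_vzero)
    then have "inv\<^bsub>?G\<^esub> (rho y) = rho y"
      using rho_Bij[OF y(1)] by (intro G.inv_equality) (auto simp: carrier_BijGroup)
    then show "inv\<^bsub>?G\<^esub> f \<in> rho ` Vn n"
      using y by simp
  next
    fix f g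
    assume "f \<in> rho ` Vn n" "g \<in> rho ` Vn n"
      then obtain y z where "y \<in> Vn n" "z \<in> Vn n" "f = rho y" "g = rho z"
      by blast
    then show "f \<otimes>\<^bsub>?G\<^esub> g \<in> rho ` Vn n"
      by (simp add: rho_mult image_eqI)
  qed
  then show ?thesis
    unfolding elementary_abelian_subgroup_def
    by (auto simp: rho_mult tadd_comm rho_vzero)
qed

lemma rho_group_regular: "regular_on (Vn n) (rho ` Vn n)"
  unfolding regular_on_def
proof (intro ballI)
  fix x y
  assume x: "x \<in> Vn n" and y: "y \<in> Vn n"
  show "\<exists>!f. f \<in> rho ` Vn n \<and> f x = y"
  proof (rule ex1I[where a = "rho (tadd x y)"])
    have "rho (tadd x y) \<in> rho ` Vn n"
      using x y by (intro imageI) simp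
    moreover have "rho (tadd x y) x = y"
      using x y by (simp add: rho_def tadd_comm[of x] tadd_cancel_right)
    ultimately show "rho (tadd x y) \<in> rho ` Vn n \<and> rho (tadd x y) x = y"
      by blast
  next
    fix f
    assume "f \<in> rho ` Vn n \<and> f x = y"
    then obtain z where z: "z \<in> Vn n" "f = rho z" "tadd x z = y"
      using x by (auto simp: rho_def)
    then have "z = tadd x y"
      using tadd_cancel_right[OF z(1) x] x by (simp add: tadd_comm)
    then show "f = rho (tadd x y)"
      using z by simp
  qed
qed

lemma twisted_transl_group_mem: "twisted_transl_group n (common_kernel n u1 u2) d \<in> ea_regular_index4 n"
proof -
  have "rho ` Vn n \<inter> transl_group n = rho ` common_kernel n u1 u2"
    using rho_in_transl_group_iff by (auto simp: common_kernel_def)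
  also have "\<dots> = transl n ` common_kernel n u1 u2"
    using rho_eq_transl by (simp cong: image_cong)
  finally have "card (rho ` Vn n \<inter> transl_group n) = card (transl n ` common_kernel n u1 u2)"
    by simp
  also have "\<dots> = card (common_kernel n u1 u2)"
    by (rule card_image, rule inj_on_subset[OF inj_on_transl]) (auto simp: common_kernel_def)
  finally have "card (transl_group n) = 4 * card (rho ` Vn n \<inter> transl_group n)"
    using card_common_kernel[OF indep] card_transl_group[of n] by simp
  then show ?thesis
    using rho_group_elementary_abelian rho_group_regular
    by (simp add: ea_regular_index4_def twisted_transl_group_eq)
qed

lemma transl_mem_twisted_transl_group_iff:
  "{w \<in> Vn n. transl n w \<in> twisted_transl_group n (common_kernel n u1 u2) d} = common_kernel n u1 u2"
proof -
  have "transl n w \<in> rho ` Vn n \<longleftrightarrow> w \<in> common_kernel n u1 u2" if w: "w \<in> Vn n" for w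
  proof
    assume "transl n w \<in> rho ` Vn n"
    then obtain y where y: "y \<in> Vn n" "transl n w = rho y"
      by blast
    then have "w = y"
      using transl_apply_vzero[OF w] rho_apply_vzero[OF y(1)] by metis
    then have "rho y \<in> transl n ` Vn n"
      using y by (metis imageI)
    then have "rho y \<in> transl_group n"
      by (simp add: transl_group_def)
    then show "w \<in> common_kernel n u1 u2"
      using rho_in_transl_group_iff[OF y(1)] \<open>w = y\<close> by simp
  next
    assume "w \<in> common_kernel n u1 u2"
    then show "transl n w \<in> rho ` Vn n"
      using w rho_eq_transl by (metis imageI)
  qed
  then show ?thesis
    unfolding twisted_transl_group_eq by (auto simp: common_kernel_def)
qed

end

section \<open>Classification of the groups\<close>

locale ea_regular_index4_group =
  fixes n :: nat and R :: "(bool list \<Rightarrow> bool list) set"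
  assumes mem: "R \<in> ea_regular_index4 n"
begin

lemma subgroup: "subgroup R (BijGroup (Vn n))"
  and commute: "f \<in> R \<Longrightarrow> g \<in> R \<Longrightarrow> f \<otimes>\<^bsub>BijGroup (Vn n)\<^esub> g = g \<otimes>\<^bsub>BijGroup (Vn n)\<^esub> f"
  and square: "f \<in> R \<Longrightarrow> f \<otimes>\<^bsub>BijGroup (Vn n)\<^esub> f = \<one>\<^bsub>BijGroup (Vn n)\<^esub>"
  and regular: "regular_on (Vn n) R"
  and card_transl_part: "card (transl_group n) = 4 * card (R \<inter> transl_group n)"
  using mem by (auto simp: ea_regular_index4_def elementary_abelian_subgroup_def)

lemma mem_Bij: "f \<in> R \<Longrightarrow> f \<in> Bij (Vn n)"
  using subgroup.subset[OF subgroup] by (auto simp: carrier_BijGroup)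

lemma apply_Vn: "f \<in> R \<Longrightarrow> x \<in> Vn n \<Longrightarrow> f x \<in> Vn n"
  using mem_Bij Bij_imp_funcset by blast

lemma compose_mem: "f \<in> R \<Longrightarrow> g \<in> R \<Longrightarrow> compose (Vn n) f g \<in> R"
  using subgroup.m_closed[OF subgroup] mult_BijGroup mem_Bij by metis

lemma apply_commute:
  assumes "f \<in> R" "g \<in> R" "x \<in> Vn n"
  shows "f (g x) = g (f x)"
proof -
  have "compose (Vn n) f g = compose (Vn n) g f"
    using commute[OF assms(1,2)] by (simp add: mult_BijGroup mem_Bij assms(1,2))
  then have "compose (Vn n) f g x = compose (Vn n) g f x"
    by simp
  then show ?thesis
    using assms(3) by (simp add: compose_def)
qed

lemma apply_apply_self:
  assumes "f \<in> R" "x \<in> Vn n"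
  shows "f (f x) = x"
proof -
  have "compose (Vn n) f f = (\<lambda>x\<in>Vn n. x)"
    using square[OF assms(1)] by (simp add: mult_BijGroup mem_Bij assms(1) one_BijGroup)
  then have "compose (Vn n) f f x = (\<lambda>x\<in>Vn n. x) x"
    by simp
  then show ?thesis
    using assms(2) by (simp add: compose_def)
qed

lemma id_mem: "(\<lambda>x\<in>Vn n. x) \<in> R"
  using subgroup.one_closed[OF subgroup] by (simp add: one_BijGroup)

definition rho :: "bool list \<Rightarrow> bool list \<Rightarrow> bool list" where
  "rho y = (THE f. f \<in> R \<and> f (vzero n) = y)"

lemma ex1_mem_apply_vzero: "y \<in> Vn n \<Longrightarrow> \<exists>!f. f \<in> R \<and> f (vzero n) = y"
  using regular by (simp add: regular_on_def)

lemma rho_mem: "y \<in> Vn n \<Longrightarrow> rho y \<in> R"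
  and rho_apply_vzero: "y \<in> Vn n \<Longrightarrow> rho y (vzero n) = y"
  unfolding rho_def using theI'[OF ex1_mem_apply_vzero] by simp_all

lemma eq_rho:
  assumes "f \<in> R"
  shows "f = rho (f (vzero n))"
proof -
  have "f (vzero n) \<in> Vn n"
    using apply_Vn[OF assms] by simp
  then show ?thesis
    unfolding rho_def using the1_equality[OF ex1_mem_apply_vzero, of "f (vzero n)" f] assms by simp
qed

lemma eq_rho_image: "R = rho ` Vn n"
proof
  show "R \<subseteq> rho ` Vn n"
  proof
    fix f
    assume "f \<in> R"
    then have "f = rho (f (vzero n))" "f (vzero n) \<in> Vn n"
      using eq_rho apply_Vn[of f "vzero n"] by simp_all
    then show "f \<in> rho ` Vn n"
      by (rule image_eqI)
  qed
  show "rho ` Vn n \<subseteq> R"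
    using rho_mem by blast
qed

lemma rho_apply_Vn: "x \<in> Vn n \<Longrightarrow> y \<in> Vn n \<Longrightarrow> rho y x \<in> Vn n"
  using apply_Vn rho_mem by blast

lemma rho_rho: "x \<in> Vn n \<Longrightarrow> y \<in> Vn n \<Longrightarrow> z \<in> Vn n \<Longrightarrow> rho y (rho z x) = rho (rho y z) x"
proof -
  assume xyz: "x \<in> Vn n" "y \<in> Vn n" "z \<in> Vn n"
  have "compose (Vn n) (rho y) (rho z) \<in> R"
    using compose_mem rho_mem xyz by blast
  moreover have "compose (Vn n) (rho y) (rho z) (vzero n) = rho y z"
    using xyz rho_apply_vzero by (simp add: compose_def)
  ultimately have "compose (Vn n) (rho y) (rho z) = rho (rho y z)"
    using eq_rho by metis
  then have "compose (Vn n) (rho y) (rho z) x = rho (rho y z) x"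
    by simp
  then show ?thesis
    using xyz by (simp add: compose_def)
qed

lemma rho_commute: "x \<in> Vn n \<Longrightarrow> y \<in> Vn n \<Longrightarrow> rho y x = rho x y"
  using apply_commute[OF rho_mem rho_mem, of y x "vzero n"] rho_apply_vzero by simp

lemma rho_rho_self: "x \<in> Vn n \<Longrightarrow> y \<in> Vn n \<Longrightarrow> rho y (rho y x) = x"
  using apply_apply_self rho_mem by blast

lemma rho_self: "x \<in> Vn n \<Longrightarrow> rho x x = vzero n"
  using rho_rho_self[of "vzero n" x] rho_apply_vzero by simp

lemma rho_cancel: "x \<in> Vn n \<Longrightarrow> y \<in> Vn n \<Longrightarrow> z \<in> Vn n \<Longrightarrow> rho x y = rho x z \<Longrightarrow> y = z"
  by (metis rho_rho_self)

definition transl_vectors :: "bool list set" where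
  "transl_vectors = {w \<in> Vn n. transl n w \<in> R}"

lemma rho_transl_vector: "w \<in> transl_vectors \<Longrightarrow> rho w = transl n w"
  using eq_rho transl_apply_vzero by (metis (mono_tags, lifting) mem_Collect_eq transl_vectors_def)

lemma rho_transl_vector_apply: "w \<in> transl_vectors \<Longrightarrow> x \<in> Vn n \<Longrightarrow> rho w x = vadd x w"
  by (simp add: rho_transl_vector transl_def)

lemma transl_vectors_index4: "transl_vectors \<in> index4_subgroups n"
proof -
  have "transl n (vzero n) = (\<lambda>x\<in>Vn n. x)"
    unfolding transl_def by (rule restrict_ext) simp
  then have vzero: "vzero n \<in> transl_vectors"
    using id_mem by (simp add: transl_vectors_def)
  have vadd: "vadd x y \<in> transl_vectors" if "x \<in> transl_vectors" "y \<in> transl_vectors" for x y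
  proof -
    have xy: "x \<in> Vn n" "y \<in> Vn n" "transl n x \<in> R" "transl n y \<in> R"
      using that by (auto simp: transl_vectors_def)
    have "compose (Vn n) (transl n x) (transl n y) = transl n (vadd x y)"
      unfolding compose_def transl_def by (rule restrict_ext) (use xy in \<open>simp add: vadd_ac\<close>)
    then show ?thesis
      using compose_mem[OF xy(3,4)] xy by (simp add: transl_vectors_def)
  qed
  have "R \<inter> transl_group n = transl n ` transl_vectors"
    by (auto simp: transl_vectors_def transl_group_def)
  then have "card (R \<inter> transl_group n) = card (transl n ` transl_vectors)"
    by simp
  also have "card (transl n ` transl_vectors) = card transl_vectors"
    by (rule card_image, rule inj_on_subset[OF inj_on_transl]) (auto simp: transl_vectors_def)
  finally have "card (R \<inter> transl_group n) = card transl_vectors"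
    by simp
  then have "4 * card transl_vectors = 2 ^ n"
    using card_transl_part card_transl_group[of n] by simp
  then show ?thesis
    using vzero vadd by (auto simp: index4_subgroups_def Vn_subgroup_def transl_vectors_def)
qed

sublocale index4_subgroup n transl_vectors
  by unfold_locales (rule transl_vectors_index4)

definition defect :: "bool list \<Rightarrow> bool list \<Rightarrow> bool list" where
  "defect x y = vadd (vadd (rho y x) x) y"

lemma length_defect: "x \<in> Vn n \<Longrightarrow> y \<in> Vn n \<Longrightarrow> length (defect x y) = n"
  using rho_apply_Vn by (simp add: defect_def)

lemma rho_eq_vadd_defect: "x \<in> Vn n \<Longrightarrow> y \<in> Vn n \<Longrightarrow> rho y x = vadd (vadd x y) (defect x y)"
  using rho_apply_Vn[of x y] by (simp add: defect_def) (intro Vn_eqI[of _ n]; auto)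

lemma defect_commute: "x \<in> Vn n \<Longrightarrow> y \<in> Vn n \<Longrightarrow> defect x y = defect y x"
  by (simp add: defect_def rho_commute[of x y] vadd_ac)

lemma rho_vadd_transl_vector:
  assumes "w \<in> transl_vectors" "x \<in> Vn n" "y \<in> Vn n"
  shows "rho y (vadd x w) = vadd (rho y x) w"
proof -
  have "rho y (vadd x w) = rho y (rho w x)"
    using assms rho_transl_vector_apply by simp
  also have "\<dots> = rho w (rho y x)"
    using apply_commute[OF rho_mem rho_mem] assms length_mem by simp
  also have "\<dots> = vadd (rho y x) w"
    using rho_transl_vector_apply[OF assms(1) rho_apply_Vn[OF assms(2,3)]] .
  finally show ?thesis .
qed

lemma defect_vadd_transl_vector:
  assumes "w \<in> transl_vectors" "x \<in> Vn n" "y \<in> Vn n"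
  shows "defect (vadd x w) y = defect x y"
  using rho_vadd_transl_vector[OF assms] assms length_mem rho_apply_Vn[OF assms(2,3)]
  by (simp add: defect_def) (intro Vn_eqI[of _ n]; auto)

lemma defect_eq_if_vadd_mem:
  assumes "x \<in> Vn n" "x' \<in> Vn n" "y \<in> Vn n" "vadd x x' \<in> transl_vectors"
  shows "defect x' y = defect x y"
  using defect_vadd_transl_vector[OF assms(4,1,3)] assms(1,2) by simp

lemma defect_eq_vzero_if_not_indep:
  assumes x: "x \<in> Vn n" and y: "y \<in> Vn n" and not_indep: "\<not> indep_mod transl_vectors x y"
  shows "defect x y = vzero n"
proof -
  consider "y \<in> transl_vectors" | "x \<in> transl_vectors" | "vadd x y \<in> transl_vectors"
    using not_indep by (auto simp: indep_mod_def)
  then have "rho y x = vadd x y"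
  proof cases
    case 1
    then show ?thesis
      using rho_transl_vector_apply x by simp
  next
    case 2
    then show ?thesis
      using rho_transl_vector_apply y rho_commute[OF x y] vadd_comm by metis
  next
    case 3
    have "rho y x = rho x (vadd x (vadd x y))"
      using rho_commute[OF x y] x y by simp
    also have "\<dots> = vadd (rho x x) (vadd x y)"
      using rho_vadd_transl_vector[OF 3 x x] .
    also have "\<dots> = vadd x y"
      using rho_self[OF x] x y by simp
    finally show ?thesis .
  qed
  then show ?thesis
    using x y by (simp add: defect_def) (intro Vn_eqI[of _ n]; auto)
qed

lemma rho_apply_mem_transl_vectors:
  assumes x: "x \<in> Vn n" and y: "y \<in> Vn n" and mem: "rho y x \<in> transl_vectors"
  shows "rho y x = vadd x y"
proof -
  define z where "z = rho y x"
  have z: "length z = n"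
    using rho_apply_Vn[OF x y] by (simp add: z_def)
  have "x = rho z y"
    using rho_commute[OF rho_apply_Vn[OF x y] y] rho_rho_self[OF x y] by (simp add: z_def)
  also have "\<dots> = vadd y z"
    using rho_transl_vector_apply[OF mem y] by (simp add: z_def)
  finally have "vadd x y = vadd (vadd z y) y"
    by (simp add: vadd_comm)
  then show ?thesis
    using y z by (simp add: z_def)
qed

lemma vadd_rho_apply_mem_transl_vectors:
  assumes x: "x \<in> Vn n" and y: "y \<in> Vn n" and mem: "vadd (rho y x) x \<in> transl_vectors"
  shows "vadd (rho y x) x = y"
proof -
  have "rho x (vadd (rho y x) x) = rho (vadd (rho y x) x) x"
    using rho_commute[of "vadd (rho y x) x" x] length_mem[OF mem] x by simp
  also have "\<dots> = rho x y"
    using rho_transl_vector_apply[OF mem x] x rho_apply_Vn[OF x y] rho_commute[OF x y]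
    by (simp add: vadd_ac)
  finally show ?thesis
    using rho_cancel[of x "vadd (rho y x) x" y] length_mem[OF mem] x y by simp
qed

text \<open>For independent \<open>x, y\<close>, regularity excludes \<open>rho y x\<close> from the cosets of \<open>0, x, y\<close>,
  so it lies in the coset of \<open>x + y\<close>.\<close>

lemma defect_mem_if_indep:
  assumes x: "x \<in> Vn n" and y: "y \<in> Vn n" and indep: "indep_mod transl_vectors x y"
  shows "defect x y \<in> transl_vectors"
proof -
  have "rho y x \<notin> transl_vectors"
    using rho_apply_mem_transl_vectors[OF x y] indep by (auto simp: indep_mod_def)
  moreover have "vadd (rho y x) x \<notin> transl_vectors"
    using vadd_rho_apply_mem_transl_vectors[OF x y] indep by (auto simp: indep_mod_def)
  moreover have "vadd (rho y x) y \<notin> transl_vectors"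
    using vadd_rho_apply_mem_transl_vectors[OF y x] rho_commute[OF x y] indep
    by (auto simp: indep_mod_def)
  ultimately have "vadd (rho y x) (vadd x y) \<in> transl_vectors"
    using nonzero_coset_cases[OF x y indep rho_apply_Vn[OF x y]] by blast
  then show ?thesis
    by (simp add: defect_def vadd_assoc)
qed

lemma defect_mem: "x \<in> Vn n \<Longrightarrow> y \<in> Vn n \<Longrightarrow> defect x y \<in> transl_vectors"
  using defect_mem_if_indep defect_eq_vzero_if_not_indep by (cases "indep_mod transl_vectors x y") auto

lemma defect_self: "x \<in> Vn n \<Longrightarrow> defect x x = vzero n"
  by (simp add: defect_def rho_self)

lemma defect_vzero_left: "y \<in> Vn n \<Longrightarrow> defect (vzero n) y = vzero n"
  by (rule defect_eq_vzero_if_not_indep) (simp_all add: indep_mod_def)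

lemma defect_cocycle:
  assumes x: "x \<in> Vn n" and y: "y \<in> Vn n" and z: "z \<in> Vn n"
  shows "vadd (defect (vadd x y) z) (defect x y) = vadd (defect (vadd y z) x) (defect y z)"
proof -
  have xy: "vadd x y \<in> Vn n" and yz: "vadd y z \<in> Vn n"
    using x y z by auto
  have "rho z (rho y x) = vadd (vadd (vadd (vadd x y) z) (defect (vadd x y) z)) (defect x y)"
    using rho_eq_vadd_defect[OF x y] rho_vadd_transl_vector[OF defect_mem[OF x y] xy z]
      rho_eq_vadd_defect[OF xy z] by simp
  moreover have "rho (rho z y) x = vadd (vadd (vadd (vadd y z) x) (defect (vadd y z) x)) (defect y z)"
    using rho_commute[OF x rho_apply_Vn[OF y z]] rho_eq_vadd_defect[OF y z]
      rho_vadd_transl_vector[OF defect_mem[OF y z] yz x] rho_eq_vadd_defect[OF yz x] by simp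
  moreover have "rho z (rho y x) = rho (rho z y) x"
    using rho_rho[OF x z y] .
  ultimately have "vadd (vadd (vadd (vadd x y) z) (defect (vadd x y) z)) (defect x y)
      = vadd (vadd (vadd (vadd y z) x) (defect (vadd y z) x)) (defect y z)"
    by simp
  moreover have "length (defect (vadd x y) z) = n" "length (defect x y) = n"
    "length (defect (vadd y z) x) = n" "length (defect y z) = n"
    using length_defect x y z xy yz by auto
  ultimately show ?thesis
    using x y z by (intro Vn_eqI[of _ n]) (auto simp: list_eq_iff_nth_eq)
qed

lemma defect_vadd_self_left: "a \<in> Vn n \<Longrightarrow> b \<in> Vn n \<Longrightarrow> defect (vadd a b) a = defect a b"
  using defect_cocycle[of a a b] defect_vzero_left defect_self length_defect
    vadd_eq_vzero_iff[of "defect (vadd a b) a" n "defect a b"]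
  by simp

lemma defect_on_coset_reps:
  assumes a: "a \<in> Vn n" and b: "b \<in> Vn n"
    and "p \<in> {a, b, vadd a b}" "q \<in> {a, b, vadd a b}" "p \<noteq> q"
  shows "defect p q = defect a b"
proof -
  have "defect b a = defect a b"
    using defect_commute[OF a b] by simp
  moreover have "defect (vadd a b) a = defect a b" "defect (vadd a b) b = defect a b"
    using defect_vadd_self_left[OF a b] defect_vadd_self_left[OF b a] \<open>defect b a = defect a b\<close>
    by (simp_all add: vadd_comm)
  moreover have "defect a (vadd a b) = defect a b" "defect b (vadd a b) = defect a b"
    using defect_commute[of a "vadd a b"] defect_commute[of b "vadd a b"] a b calculation by simp_all
  ultimately show ?thesis
    using assms(3-5) by auto
qed

text \<open>Shifting \<open>x\<close> and \<open>y\<close> within their cosets reduces to the representatives \<open>a, b, a + b\<close>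
  of the nonzero cosets, which are distinct for independent \<open>x, y\<close>.\<close>

lemma defect_eq_if_indep:
  assumes a: "a \<in> Vn n" and b: "b \<in> Vn n" and ab: "indep_mod transl_vectors a b"
    and x: "x \<in> Vn n" and y: "y \<in> Vn n" and xy: "indep_mod transl_vectors x y"
  shows "defect x y = defect a b"
proof -
  have rep: "\<exists>c\<in>{a, b, vadd a b}. vadd x c \<in> transl_vectors" if "x \<in> Vn n" "x \<notin> transl_vectors" for x
    using nonzero_coset_cases[OF a b ab that] by blast
  obtain c where c: "c \<in> {a, b, vadd a b}" "vadd x c \<in> transl_vectors"
    using rep x xy by (auto simp: indep_mod_def)
  obtain c' where c': "c' \<in> {a, b, vadd a b}" "vadd y c' \<in> transl_vectors"
    using rep y xy by (auto simp: indep_mod_def)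
  have cV: "c \<in> Vn n" "c' \<in> Vn n"
    using c(1) c'(1) a b by auto
  have "c \<noteq> c'"
  proof
    assume "c = c'"
    then have "vadd (vadd x c) (vadd y c') = vadd x y"
      using x y cV by (intro Vn_eqI[of _ n]) auto
    then show False
      using vadd_mem[OF c(2) c'(2)] xy by (simp add: indep_mod_def)
  qed
  have "defect x y = defect c y"
    using defect_eq_if_vadd_mem[OF cV(1) x y] c(2) by (simp add: vadd_comm)
  also have "\<dots> = defect y c"
    using defect_commute[OF cV(1) y] .
  also have "\<dots> = defect c' c"
    using defect_eq_if_vadd_mem[OF cV(2) y cV(1)] c'(2) by (simp add: vadd_comm)
  also have "\<dots> = defect a b"
    using defect_on_coset_reps[OF a b c'(1) c(1)] \<open>c \<noteq> c'\<close> by simp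
  finally show ?thesis .
qed

lemma rho_eq_restrict_defect: "y \<in> Vn n \<Longrightarrow> rho y = (\<lambda>x\<in>Vn n. vadd (vadd x y) (defect x y))"
  using mem_Bij[OF rho_mem] Bij_imp_extensional rho_eq_vadd_defect
  by (intro extensionalityI[where A = "Vn n"]) auto

lemma defect_const:
  "\<exists>d\<in>transl_vectors. d \<noteq> vzero n \<and>
     (\<forall>x\<in>Vn n. \<forall>y\<in>Vn n. defect x y = (if indep_mod transl_vectors x y then d else vzero n))"
proof -
  obtain a b where a: "a \<in> Vn n" and b: "b \<in> Vn n" and ab: "indep_mod transl_vectors a b"
    using exists_indep_mod by blast
  have defect_eq: "defect x y = (if indep_mod transl_vectors x y then defect a b else vzero n)"
    if "x \<in> Vn n" "y \<in> Vn n" for x y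
    using defect_eq_if_indep[OF a b ab that] defect_eq_vzero_if_not_indep[OF that] by simp
  have "defect a b \<noteq> vzero n"
  proof
    assume d0: "defect a b = vzero n"
    have "defect x a = vzero n" if "x \<in> Vn n" for x
      using defect_eq[OF that a] d0 by simp
    then have "rho a = transl n a"
      using rho_eq_restrict_defect[OF a] a by (simp add: transl_def cong: restrict_cong)
    then have "a \<in> transl_vectors"
      using rho_mem[OF a] a by (simp add: transl_vectors_def)
    then show False
      using ab by (simp add: indep_mod_def)
  qed
  then show ?thesis
    using defect_mem[OF a b] defect_eq by blast
qed

lemma eq_twisted_transl_group:
  obtains d where "d \<in> transl_vectors - {vzero n}" "R = twisted_transl_group n transl_vectors d"
proof -
  obtain d where d: "d \<in> transl_vectors" "d \<noteq> vzero n"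
    and defect_eq: "\<forall>x\<in>Vn n. \<forall>y\<in>Vn n. defect x y = (if indep_mod transl_vectors x y then d else vzero n)"
    using defect_const by blast
  have "rho y = twisted_transl n transl_vectors d y" if "y \<in> Vn n" for y
    using rho_eq_restrict_defect[OF that] defect_eq that
    by (simp add: twisted_transl_def cong: restrict_cong)
  then have "rho ` Vn n = twisted_transl_group n transl_vectors d"
    unfolding twisted_transl_group_def by (rule image_cong[OF refl])
  then have "R = twisted_transl_group n transl_vectors d"
    by (subst eq_rho_image)
  then show ?thesis
    using that d by blast
qed

end

section \<open>Counting the groups\<close>

definition twist_params :: "nat \<Rightarrow> (bool list set \<times> bool list) set" where
  "twist_params n = (SIGMA W : index4_subgroups n. W - {vzero n})"

lemma twist_params_alternating_twist:
  assumes "(W, d) \<in> twist_params n"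
  obtains u1 u2 where "W = common_kernel n u1 u2" "alternating_twist n u1 u2 d"
proof -
  have W: "W \<in> index4_subgroups n" "d \<in> W" "d \<noteq> vzero n"
    using assms by (auto simp: twist_params_def)
  then obtain u1 u2 where "(u1, u2) \<in> indep_pairs n" "W = common_kernel n u1 u2"
    using index4_subgroup.eq_common_kernel[of n W] by (auto simp: index4_subgroup_def)
  with W show ?thesis
    using that by (auto simp: alternating_twist_def)
qed

lemma ea_regular_index4_eq_image:
  "ea_regular_index4 n = (\<lambda>(W, d). twisted_transl_group n W d) ` twist_params n"
proof
  show "ea_regular_index4 n \<subseteq> (\<lambda>(W, d). twisted_transl_group n W d) ` twist_params n"
  proof
    fix R
    assume "R \<in> ea_regular_index4 n"
    then interpret ea_regular_index4_group n R
      by unfold_locales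
    obtain d where "d \<in> transl_vectors - {vzero n}" "R = twisted_transl_group n transl_vectors d"
      by (rule eq_twisted_transl_group)
    then show "R \<in> (\<lambda>(W, d). twisted_transl_group n W d) ` twist_params n"
      using transl_vectors_index4 by (auto simp: twist_params_def)
  qed
  show "(\<lambda>(W, d). twisted_transl_group n W d) ` twist_params n \<subseteq> ea_regular_index4 n"
  proof clarify
    fix W d
    assume "(W, d) \<in> twist_params n"
    then obtain u1 u2 where "W = common_kernel n u1 u2" "alternating_twist n u1 u2 d"
      by (rule twist_params_alternating_twist)
    then show "twisted_transl_group n W d \<in> ea_regular_index4 n"
      using alternating_twist.twisted_transl_group_mem by blast
  qed
qed

lemma twist_params_recover_subgroup:
  assumes "(W, d) \<in> twist_params n"
  shows "{w \<in> Vn n. transl n w \<in> twisted_transl_group n W d} = W"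
proof -
  obtain u1 u2 where "W = common_kernel n u1 u2" "alternating_twist n u1 u2 d"
    by (rule twist_params_alternating_twist[OF assms])
  then show ?thesis
    using alternating_twist.transl_mem_twisted_transl_group_iff by blast
qed

text \<open>For \<open>a, b\<close> independent modulo \<open>W\<close>, the element of the group mapping \<open>0\<close> to \<open>b\<close>
  sends \<open>a\<close> to \<open>a + b + d\<close>.\<close>

lemma twist_params_recover_vector:
  assumes Wd: "(W, d) \<in> twist_params n" and Wd': "(W, d') \<in> twist_params n"
    and eq: "twisted_transl_group n W d = twisted_transl_group n W d'"
  shows "d = d'"
proof -
  interpret index4_subgroup n W
    using Wd by unfold_locales (simp add: twist_params_def)
  obtain a b where ab: "a \<in> Vn n" "b \<in> Vn n" "indep_mod W a b"
    using exists_indep_mod by blast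
  have "twisted_transl n W d b \<in> twisted_transl_group n W d"
    using ab(2) unfolding twisted_transl_group_def by (rule imageI)
  then obtain y where y: "y \<in> Vn n" "twisted_transl n W d b = twisted_transl n W d' y"
    using eq by (auto simp: twisted_transl_group_def)
  have "twisted_transl n W d b (vzero n) = twisted_transl n W d' y (vzero n)"
    using y(2) by simp
  then have "y = b"
    using ab y(1) by (simp add: twisted_transl_def indep_mod_def)
  have "twisted_transl n W d b a = twisted_transl n W d' y a"
    using y(2) by simp
  then have "vadd (vadd a b) d = vadd (vadd a b) d'"
    using ab \<open>y = b\<close> by (simp add: twisted_transl_def)
  then have "vadd (vadd a b) (vadd (vadd a b) d) = vadd (vadd a b) (vadd (vadd a b) d')"
    by simp
  moreover have "length d = n" "length d' = n"
    using Wd Wd' length_mem by (auto simp: twist_params_def)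
  ultimately show ?thesis
    using ab by simp
qed

lemma inj_on_twisted_transl_group: "inj_on (\<lambda>(W, d). twisted_transl_group n W d) (twist_params n)"
proof (rule inj_onI, clarify)
  fix W d W' d'
  assume Wd: "(W, d) \<in> twist_params n" and W'd': "(W', d') \<in> twist_params n"
    and eq: "twisted_transl_group n W d = twisted_transl_group n W' d'"
  have "W = W'"
    using twist_params_recover_subgroup[OF Wd] twist_params_recover_subgroup[OF W'd'] eq by simp
  then show "W = W' \<and> d = d'"
    using twist_params_recover_vector[OF Wd] W'd' eq by simp
qed

lemma card_ea_regular_index4:
  assumes "n \<ge> 2"
  shows "card (ea_regular_index4 n) = card (index4_subgroups n) * (2 ^ (n - 2) - 1)"
proof -
  have "card (ea_regular_index4 n) = card (twist_params n)"
    unfolding ea_regular_index4_eq_image by (rule card_image[OF inj_on_twisted_transl_group])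
  also have "\<dots> = (\<Sum>W\<in>index4_subgroups n. card (W - {vzero n}))"
    unfolding twist_params_def
    by (rule card_SigmaI) (auto simp: finite_index4_subgroups index4_subgroup.finite index4_subgroup_def)
  also have "\<dots> = (\<Sum>W\<in>index4_subgroups n. 2 ^ (n - 2) - 1)"
  proof (rule sum.cong[OF refl])
    fix W
    assume "W \<in> index4_subgroups n"
    then interpret index4_subgroup n W
      by unfold_locales
    obtain m where "n = 2 + m"
      using le_Suc_ex[OF assms] by blast
    then have "card W = 2 ^ (n - 2)"
      using card_eq by (simp add: power_add)
    then show "card (W - {vzero n}) = 2 ^ (n - 2) - 1"
      by (simp add: card_Diff_singleton)
  qed
  finally show ?thesis
    by simp
qed

theorem mainTheorem9:
  fixes n :: nat
  assumes "n > 2"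
  shows "card {R. elementary_abelian_subgroup R (BijGroup (Vn n)) \<and> regular_on (Vn n) R
                 \<and> card (transl_group n) = 4 * card (R \<inter> transl_group n)}
         = ((2^(n-2) - 1) * (2^(n-1) - 1) * (2^n - 1)) div 3"
proof -
  have "(2::nat) ^ n - 2 = 2 * (2 ^ (n - 1) - 1)"
    using assms by (cases n) simp_all
  then have "3 * card (index4_subgroups n) = (2 ^ n - 1) * (2 ^ (n - 1) - 1)"
    using card_index4_subgroups[of n] by simp
  then have "(2 ^ (n - 2) - 1) * (2 ^ (n - 1) - 1) * (2 ^ n - 1) = 3 * card (ea_regular_index4 n)"
    using card_ea_regular_index4[of n] assms by simp
  then show ?thesis
    by (simp add: ea_regular_index4_def)
qed

end
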